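(* Let $G$ be a group, $\mathcal{A}$ a unital $C^\ast$-algebra, $\tau$ an action of $G$ on $\mathcal{A}$ by unital $C^\ast$-automorphisms, $\mathcal{H}$ a Hilbert space and $\phi\in\mathrm{UCP}^{G_\tau}(\mathcal{A},\mathcal{B}(\mathcal{H}))$. The following are equivalent: (1) $\phi$ is a $C^\ast$-extreme point of $\mathrm{UCP}^{G_\tau}(\mathcal{A},\mathcal{B}(\mathcal{H}))$; (2) for every $\psi\in\mathrm{CP}^{G_\tau}(\mathcal{A},\mathcal{B}(\mathcal{H}))$ with $\psi\le\phi$ and $\psi(1_\mathcal{A})$ invertible, there exists an invertible $Z\in\mathcal{B}(\mathcal{H})$ such that $\psi(a)=Z^\ast\phi(a)Z$ for all $a\in\mathcal{A}$.
   Context: $\mathrm{CP}^{G_\tau}(\mathcal{A},\mathcal{B}(\mathcal{H}))$ is the set of completely positive maps $\psi:\mathcal{A}\to\mathcal{B}(\mathcal{H})$ with $\psi(\tau_g(a))=\psi(a)$ for all $g\in G,a\in\mathcal{A}$; $\mathrm{UCP}^{G_\tau}(\mathcal{A},\mathcal{B}(\mathcal{H}))$ is its subset of unital maps. $\psi\le\phi$ means $\phi-\psi$ is completely positive. A $C^\ast$-convex combination is $\sum_iT_i^\ast\phi_i(\cdot)T_i$ with $T_i\in\mathcal{B}(\mathcal{H})$, $\sum_iT_i^\ast T_i=\mathrm{Id}_\mathcal{H}$; proper if all $T_i$ invertible. $\phi$ is a $C^\ast$-extreme point of $\mathrm{UCP}^{G_\tau}(\mathcal{A},\mathcal{B}(\mathcal{H}))$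 if whenever $\phi$ is a proper $C^\ast$-convex combination of elements $\phi_i$ of this set, there exist unitaries $U_i$ on $\mathcal{H}$ with $\phi_i=U_i^\ast\phi(\cdot)U_i$ for all $i$. *)

theory Defs
  imports Complex_Main "HOL-Algebra.Group"
begin

class complex_vec = real_vector +
  fixes cscale :: "complex \<Rightarrow> 'a \<Rightarrow> 'a"
  assumes cscale_add_right: "cscale a (x + y) = cscale a x + cscale a y"
    and cscale_add_left: "cscale (a + b) x = cscale a x + cscale b x"
    and cscale_cscale: "cscale a (cscale b x) = cscale (a * b) x"
    and cscale_one: "cscale 1 x = x"
    and scaleR_cscale: "scaleR r x = cscale (complex_of_real r) x"

class complex_normed_vec = complex_vec + real_normed_vector +
  assumes norm_cscale: "norm (cscale a x) = cmod a * norm x"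

class complex_hilbert = complex_normed_vec + banach +
  fixes cinner :: "'a \<Rightarrow> 'a \<Rightarrow> complex"
  assumes cinner_add_right: "cinner x (y + z) = cinner x y + cinner x z"
    and cinner_cscale_right: "cinner x (cscale a y) = a * cinner x y"
    and cinner_cnj: "cinner y x = cnj (cinner x y)"
    and norm_cinner: "norm x = sqrt (Re (cinner x x))"

class cstar_algebra = complex_normed_vec + real_normed_algebra_1 + banach +
  fixes cstar :: "'a \<Rightarrow> 'a"
  assumes cstar_cstar: "cstar (cstar x) = x"
    and cstar_add: "cstar (x + y) = cstar x + cstar y"
    and cstar_cscale: "cstar (cscale a x) = cscale (cnj a) (cstar x)"
    and cstar_mult: "cstar (x * y) = cstar y * cstar x"
    and cscale_mult_left: "cscale a x * y = cscale a (x * y)"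
    and cscale_mult_right: "x * cscale a y = cscale a (x * y)"
    and cstar_identity: "norm (cstar x * x) = (norm x)\<^sup>2"

definition clinear :: "('a::complex_vec \<Rightarrow> 'b::complex_vec) \<Rightarrow> bool" where
  "clinear f \<longleftrightarrow> (\<forall>x y. f (x + y) = f x + f y) \<and> (\<forall>c x. f (cscale c x) = cscale c (f x))"

definition bounded_op :: "('h::complex_hilbert \<Rightarrow> 'h) \<Rightarrow> bool" where
  "bounded_op T \<longleftrightarrow> clinear T \<and> (\<exists>K. \<forall>x. norm (T x) \<le> K * norm x)"

definition adj :: "('h::complex_hilbert \<Rightarrow> 'h) \<Rightarrow> ('h \<Rightarrow> 'h)" where
  "adj T = (SOME S. \<forall>x y. cinner (S x) y = cinner x (T y))"

definition invertible_op :: "('h::complex_hilbert \<Rightarrow> 'h) \<Rightarrow> bool" where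
  "invertible_op T \<longleftrightarrow> bounded_op T \<and> (\<exists>W. bounded_op W \<and> W \<circ> T = id \<and> T \<circ> W = id)"

definition unitary_op :: "('h::complex_hilbert \<Rightarrow> 'h) \<Rightarrow> bool" where
  "unitary_op U \<longleftrightarrow> bounded_op U \<and> adj U \<circ> U = id \<and> U \<circ> adj U = id"

text \<open>A map psi : A \<rightarrow> B(H) is completely positive if it is linear and for all n,
  psi_n maps positive elements of M_n(A) (i.e. those of the form X* X) to positive
  operators on H^n: for X in M_n(A) and xi in H^n,
  sum_{i,j} <xi_i, psi((X*X)_{ij}) xi_j> \<ge> 0, where (X*X)_{ij} = sum_k (X_{ki})* X_{kj}.\<close>
definition cp_map :: "('a::cstar_algebra \<Rightarrow> 'h::complex_hilbert \<Rightarrow> 'h) \<Rightarrow> bool" where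
  "cp_map \<psi> \<longleftrightarrow>
     (\<forall>x y. \<psi> (x + y) = (\<lambda>h. \<psi> x h + \<psi> y h)) \<and>
     (\<forall>c x. \<psi> (cscale c x) = (\<lambda>h. cscale c (\<psi> x h))) \<and>
     (\<forall>a. bounded_op (\<psi> a)) \<and>
     (\<forall>(n::nat) (X::nat \<Rightarrow> nat \<Rightarrow> 'a) (\<xi>::nat \<Rightarrow> 'h).
        let s = (\<Sum>i<n. \<Sum>j<n. cinner (\<xi> i) (\<psi> (\<Sum>k<n. cstar (X k i) * X k j) (\<xi> j)))
        in Im s = 0 \<and> 0 \<le> Re s)"

definition cp_le :: "('a::cstar_algebra \<Rightarrow> 'h::complex_hilbert \<Rightarrow> 'h) \<Rightarrow> ('a \<Rightarrow> 'h \<Rightarrow> 'h) \<Rightarrow> bool" where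
  "cp_le \<psi> \<phi> \<longleftrightarrow> cp_map (\<lambda>a h. \<phi> a h - \<psi> a h)"

definition unital_star_aut :: "('a::cstar_algebra \<Rightarrow> 'a) \<Rightarrow> bool" where
  "unital_star_aut f \<longleftrightarrow> bij f \<and> clinear f \<and> (\<forall>x y. f (x * y) = f x * f y)
     \<and> (\<forall>x. f (cstar x) = cstar (f x)) \<and> f 1 = 1"

definition cstar_action :: "('g, 'b) monoid_scheme \<Rightarrow> ('g \<Rightarrow> 'a::cstar_algebra \<Rightarrow> 'a) \<Rightarrow> bool" where
  "cstar_action G \<tau> \<longleftrightarrow> (\<forall>g\<in>carrier G. unital_star_aut (\<tau> g))
     \<and> (\<forall>g\<in>carrier G. \<forall>h\<in>carrier G. \<tau> (g \<otimes>\<^bsub>G\<^esub> h) = \<tau> g \<circ> \<tau> h)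
     \<and> \<tau> \<one>\<^bsub>G\<^esub> = id"

definition CP_inv :: "('g, 'b) monoid_scheme \<Rightarrow> ('g \<Rightarrow> 'a::cstar_algebra \<Rightarrow> 'a)
    \<Rightarrow> ('a \<Rightarrow> 'h::complex_hilbert \<Rightarrow> 'h) set" where
  "CP_inv G \<tau> = {\<psi>. cp_map \<psi> \<and> (\<forall>g\<in>carrier G. \<forall>a. \<psi> (\<tau> g a) = \<psi> a)}"

definition UCP_inv :: "('g, 'b) monoid_scheme \<Rightarrow> ('g \<Rightarrow> 'a::cstar_algebra \<Rightarrow> 'a)
    \<Rightarrow> ('a \<Rightarrow> 'h::complex_hilbert \<Rightarrow> 'h) set" where
  "UCP_inv G \<tau> = {\<psi>. \<psi> \<in> CP_inv G \<tau> \<and> \<psi> 1 = id}"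

definition C_extreme :: "('g, 'b) monoid_scheme \<Rightarrow> ('g \<Rightarrow> 'a::cstar_algebra \<Rightarrow> 'a)
    \<Rightarrow> ('a \<Rightarrow> 'h::complex_hilbert \<Rightarrow> 'h) \<Rightarrow> bool" where
  "C_extreme G \<tau> \<phi> \<longleftrightarrow> \<phi> \<in> UCP_inv G \<tau> \<and>
     (\<forall>(n::nat) (T::nat \<Rightarrow> 'h \<Rightarrow> 'h) (\<Phi>::nat \<Rightarrow> 'a \<Rightarrow> 'h \<Rightarrow> 'h).
        (\<forall>i<n. \<Phi> i \<in> UCP_inv G \<tau> \<and> invertible_op (T i))
        \<and> (\<forall>h. (\<Sum>i<n. adj (T i) (T i h)) = h)
        \<and> (\<forall>a. \<phi> a = (\<lambda>h. \<Sum>i<n. adj (T i) (\<Phi> i a (T i h))))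
        \<longrightarrow> (\<exists>U::nat \<Rightarrow> 'h \<Rightarrow> 'h. \<forall>i<n. unitary_op (U i) \<and>
               (\<forall>a. \<Phi> i a = adj (U i) \<circ> \<phi> a \<circ> U i)))"

end

theory Submission
  imports Defs
begin

text \<open>
  (1) implies (2): given \<psi> \<le> \<phi> with \<psi>(1) invertible, choose t > 0 so small that
  A1 = t \<psi>(1) and A2 = 1 - t \<psi>(1) are both positive and invertible (the latter by a Neumann
  series), and let R1, R2 be their positive square roots. Then
  \<phi> = R1 \<Phi>1 R1 + R2 \<Phi>2 R2 with the invariant unital maps \<Phi>1 = R1^-1 (t \<psi>) R1^-1 and
  \<Phi>2 = R2^-1 (\<phi> - t \<psi>) R2^-1, a proper C*-convex combination; hence \<Phi>1 = U* \<phi> U for a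
  unitary U, and \<psi> = Z* \<phi> Z with Z = t^(-1/2) U R1.

  (2) implies (1): in a proper C*-convex combination \<phi> = \<Sum> T_i* \<Phi>_i T_i, every summand
  \<psi>_i = T_i* \<Phi>_i T_i is dominated by \<phi> and \<psi>_i(1) = T_i* T_i is invertible, so \<psi>_i = Z* \<phi> Z.
  Then U = Z T_i^-1 satisfies U* U = \<Phi>_i(1) = 1, so U is unitary and \<Phi>_i = U* \<phi> U.
\<close>

lemma cinner_add_left: "cinner (x + y) z = cinner x z + cinner y z"
  by (metis cinner_cnj cinner_add_right complex_cnj_add)

lemma cinner_cscale_left: "cinner (cscale a x) y = cnj a * cinner x y"
  by (metis cinner_cnj cinner_cscale_right complex_cnj_mult complex_cnj_cnj)

lemma cinner_zero_right [simp]: "cinner x 0 = 0"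
  by (metis add_cancel_right_right add_0 cinner_add_right)

lemma cinner_zero_left [simp]: "cinner 0 x = 0"
  by (metis cinner_cnj cinner_zero_right complex_cnj_zero)

lemma cinner_diff_right: "cinner x (y - z) = cinner x y - cinner x z"
  by (metis cinner_add_right diff_add_cancel eq_diff_eq)

lemma cinner_diff_left: "cinner (y - z) x = cinner y x - cinner z x"
  by (metis cinner_add_left diff_add_cancel eq_diff_eq)

lemma cinner_scaleR_right: "cinner x (scaleR r y) = complex_of_real r * cinner x y"
  by (simp add: scaleR_cscale cinner_cscale_right)

lemma cinner_scaleR_left: "cinner (scaleR r x) y = complex_of_real r * cinner x y"
  by (simp add: scaleR_cscale cinner_cscale_left)

lemma cinner_self_Im: "Im (cinner x x) = 0"
  by (metis cinner_cnj cnj.sel(2) neg_equal_zero)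

lemma cinner_self_Re_nonneg: "0 \<le> Re (cinner x x)"
proof (rule ccontr)
  assume "\<not> ?thesis"
  then have "sqrt (Re (cinner x x)) < 0" by simp
  then show False using norm_cinner[of x] norm_ge_zero[of x] by linarith
qed

lemma power2_norm_eq_cinner: "(norm x)\<^sup>2 = Re (cinner x x)"
  using norm_cinner[of x] cinner_self_Re_nonneg[of x] by simp

lemma cinner_self_eq_norm: "cinner x x = complex_of_real ((norm x)\<^sup>2)"
  by (simp add: complex_eq_iff power2_norm_eq_cinner cinner_self_Im)

lemma cinner_self_eq_zero: "cinner x x = 0 \<Longrightarrow> x = 0"
  by (metis cinner_self_eq_norm norm_eq_zero of_real_eq_0_iff zero_eq_power2)

lemma cinner_eqI: "(\<And>y. cinner x y = cinner x' y) \<Longrightarrow> x = x'"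
  by (metis cinner_diff_left cinner_self_eq_zero eq_iff_diff_eq_0)

lemma cscale_zero_right [simp]: "cscale c 0 = (0::'a::complex_vec)"
  by (metis add_cancel_right_right add_0 cscale_add_right)

lemma cscale_diff_right: "cscale c (x - y) = cscale c x - cscale c (y::'a::complex_vec)"
  by (metis cscale_add_right diff_add_cancel eq_diff_eq)

lemma scaleR_cscale_commute: "scaleR r (cscale c x) = cscale c (scaleR r (x::'a::complex_vec))"
  by (simp add: scaleR_cscale cscale_cscale mult.commute)

lemma bounded_linear_cscale: "bounded_linear (cscale c :: 'a::complex_normed_vec \<Rightarrow> 'a)"
proof (rule bounded_linear_intro[where K="cmod c"])
  show "cscale c (x + y) = cscale c x + cscale c y" for x y :: 'a by (rule cscale_add_right)
  show "cscale c (r *\<^sub>R x) = r *\<^sub>R cscale c x" for r and x :: 'a by (simp add: scaleR_cscale_commute)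
  show "norm (cscale c x) \<le> norm x * cmod c" for x :: 'a by (simp add: norm_cscale)
qed

lemma clinear_ident: "clinear (\<lambda>x. x)"
  by (simp add: clinear_def)

lemma cinner_expand_quadratic:
  assumes "clinear A"
  shows "cinner (x + cscale c y) (A (x + cscale c y)) =
    cinner x (A x) + c * cinner x (A y) + cnj c * cinner y (A x) + cnj c * c * cinner y (A y)"
  using assms
  by (simp add: clinear_def cinner_add_left cinner_add_right cinner_cscale_left cinner_cscale_right
      algebra_simps)

lemma discriminant_le_if_quadratic_nonneg:
  fixes a N :: real and b :: complex
  assumes "\<And>c. 0 \<le> a - 2 * Re (c * b) + (cmod c)\<^sup>2 * N"
  shows "(cmod b)\<^sup>2 \<le> a * N"
proof -
  have real_line: "0 \<le> a - 2 * t * (cmod b)\<^sup>2 + t\<^sup>2 * (cmod b)\<^sup>2 * N" for t :: real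
  proof -
    have "Re (complex_of_real t * cnj b * b) = t * (cmod b)\<^sup>2"
      using cmod_power2[of b] by (simp add: power2_eq_square algebra_simps)
    moreover have "(cmod (complex_of_real t * cnj b))\<^sup>2 = t\<^sup>2 * (cmod b)\<^sup>2"
      by (simp add: norm_mult power_mult_distrib)
    ultimately show ?thesis using assms[of "complex_of_real t * cnj b"] by (simp add: algebra_simps)
  qed
  show ?thesis
  proof (cases "b = 0")
    case True
    have a0: "0 \<le> a" using real_line[of 0] by simp
    moreover have "0 \<le> N"
    proof -
      have "0 \<le> a + t\<^sup>2 * N" for t
        using assms[of "complex_of_real t"] True by simp
      from this[of "sqrt (a + 1) / sqrt (- N)"] show ?thesis
        using a0 by (cases "N < 0") (auto simp: power_divide)
    qed
    ultimately show ?thesis using True by simp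
  next
    case False
    show ?thesis
    proof (cases "N > 0")
      case True
      have "0 \<le> a - 2 * (1 / N) * (cmod b)\<^sup>2 + (1 / N)\<^sup>2 * (cmod b)\<^sup>2 * N" by (rule real_line)
      also have "\<dots> = a - (cmod b)\<^sup>2 / N" using True by (simp add: power2_eq_square field_simps)
      finally show ?thesis using True by (simp add: field_simps)
    next
      case False
      define t where "t = (a + 1) / (cmod b)\<^sup>2"
      have "0 \<le> a - 2 * t * (cmod b)\<^sup>2 + t\<^sup>2 * (cmod b)\<^sup>2 * N" by (rule real_line)
      moreover have "t\<^sup>2 * (cmod b)\<^sup>2 * N \<le> 0" using False by (simp add: mult_nonneg_nonpos)
      ultimately have "a < 0" using \<open>b \<noteq> 0\<close> by (simp add: t_def)
      then show ?thesis using real_line[of 0] by simp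
    qed
  qed
qed

lemma Re_quadratic_expansion:
  "Im d = 0 \<Longrightarrow> Re (a - c * b - cnj c * cnj b + cnj c * c * d) = Re a - 2 * Re (c * b) + (cmod c)\<^sup>2 * Re d"
  using cmod_power2[of c] by (simp add: power2_eq_square algebra_simps)

lemma positive_form_hermitian:
  assumes "clinear A" "\<And>x. Im (cinner x (A x)) = 0"
  shows "cinner y (A x) = cnj (cinner x (A y))"
proof -
  have "Im (cinner x (A y)) + Im (cinner y (A x)) = 0"
    using assms(2)[of "x + cscale 1 y"] cinner_expand_quadratic[OF assms(1), of x 1 y]
      assms(2)[of x] assms(2)[of y] by simp
  moreover have "Re (cinner x (A y)) - Re (cinner y (A x)) = 0"
    using assms(2)[of "x + cscale \<i> y"] cinner_expand_quadratic[OF assms(1), of x \<i> y]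
      assms(2)[of x] assms(2)[of y] by simp
  ultimately show ?thesis by (simp add: complex_eq_iff)
qed

lemma positive_form_Cauchy_Schwarz:
  assumes "clinear A" "\<And>x. Im (cinner x (A x)) = 0" "\<And>x. 0 \<le> Re (cinner x (A x))"
  shows "(cmod (cinner x (A y)))\<^sup>2 \<le> Re (cinner x (A x)) * Re (cinner y (A y))"
proof (rule discriminant_le_if_quadratic_nonneg)
  fix c
  have "cinner (x + cscale (- c) y) (A (x + cscale (- c) y)) =
    cinner x (A x) - c * cinner x (A y) - cnj c * cnj (cinner x (A y)) + cnj c * c * cinner y (A y)"
    using cinner_expand_quadratic[OF assms(1), of x "- c" y] positive_form_hermitian[OF assms(1,2), of x y]
    by simp
  then have "Re (cinner (x + cscale (- c) y) (A (x + cscale (- c) y))) =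
      Re (cinner x (A x)) - 2 * Re (c * cinner x (A y)) + (cmod c)\<^sup>2 * Re (cinner y (A y))"
    using Re_quadratic_expansion[OF assms(2)] by presburger
  then show "0 \<le> Re (cinner x (A x)) - 2 * Re (c * cinner x (A y)) + (cmod c)\<^sup>2 * Re (cinner y (A y))"
    using assms(3)[of "x + cscale (- c) y"] by linarith
qed

lemma cmod_cinner_le: "cmod (cinner x y) \<le> norm x * norm y"
proof -
  have "(cmod (cinner x y))\<^sup>2 \<le> Re (cinner x x) * Re (cinner y y)"
    using positive_form_Cauchy_Schwarz[OF clinear_ident, of x y] by (simp add: cinner_self_Im cinner_self_Re_nonneg)
  also have "\<dots> = (norm x * norm y)\<^sup>2" by (simp add: power2_norm_eq_cinner power_mult_distrib)
  finally show ?thesis by (meson mult_nonneg_nonneg norm_ge_zero power2_le_imp_le)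
qed

lemma orthogonal_if_norm_minimal:
  assumes "\<And>c. norm w \<le> norm (w + cscale c u)"
  shows "cinner w u = 0"
proof -
  have "(cmod (cinner w u))\<^sup>2 \<le> 0 * Re (cinner u u)"
  proof (rule discriminant_le_if_quadratic_nonneg)
    fix c
    have "cinner (w + cscale (- c) u) (w + cscale (- c) u) =
        cinner w w - c * cinner w u - cnj c * cnj (cinner w u) + cnj c * c * cinner u u"
      using cinner_expand_quadratic[OF clinear_ident, of w "- c" u] by (simp add: cinner_cnj[of u w])
    then have "Re (cinner (w + cscale (- c) u) (w + cscale (- c) u)) =
        Re (cinner w w) - 2 * Re (c * cinner w u) + (cmod c)\<^sup>2 * Re (cinner u u)"
      by (metis Re_quadratic_expansion cinner_self_Im)
    moreover have "(norm w)\<^sup>2 \<le> (norm (w + cscale (- c) u))\<^sup>2"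
      using assms[of "- c"] by (simp add: power_mono)
    ultimately show "0 \<le> 0 - 2 * Re (c * cinner w u) + (cmod c)\<^sup>2 * Re (cinner u u)"
      unfolding power2_norm_eq_cinner by linarith
  qed
  then show ?thesis by simp
qed

lemma bounded_linear_cinner_right: "bounded_linear (cinner x)"
proof (rule bounded_linear_intro[where K="norm x"])
  show "cinner x (a + b) = cinner x a + cinner x b" for a b by (rule cinner_add_right)
  show "cinner x (r *\<^sub>R a) = r *\<^sub>R cinner x a" for r a
    by (simp add: cinner_scaleR_right scaleR_conv_of_real)
  show "norm (cinner x a) \<le> norm a * norm x" for a using cmod_cinner_le[of x a] by (simp add: mult.commute)
qed

lemma bounded_linear_cinner_left: "bounded_linear (\<lambda>v. cinner v y)"
proof (rule bounded_linear_intro[where K="norm y"])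
  show "cinner (a + b) y = cinner a y + cinner b y" for a b by (rule cinner_add_left)
  show "cinner (r *\<^sub>R a) y = r *\<^sub>R cinner a y" for r a
    by (simp add: cinner_scaleR_left scaleR_conv_of_real)
  show "norm (cinner a y) \<le> norm a * norm y" for a using cmod_cinner_le[of a y] by simp
qed

lemma clinearD:
  assumes "clinear f"
  shows "f (x + y) = f x + f y" "f (cscale c x) = cscale c (f x)"
  using assms unfolding clinear_def by auto

lemma clinear_linear: "clinear f \<Longrightarrow> linear f"
  by (rule linearI) (simp_all add: clinearD scaleR_cscale)

lemma clinear_diff: "clinear f \<Longrightarrow> f (x - y) = f x - f y"
  by (simp add: clinear_linear linear_diff)

lemma clinear_0: "clinear f \<Longrightarrow> f 0 = 0"
  by (simp add: clinear_linear linear_0)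

lemma clinear_scaleR: "clinear f \<Longrightarrow> f (r *\<^sub>R x) = r *\<^sub>R f x"
  by (simp add: clinear_linear linear_scale)

lemma clinear_comp: "clinear f \<Longrightarrow> clinear g \<Longrightarrow> clinear (\<lambda>x. f (g x))"
  by (simp add: clinear_def)

lemma clinear_id_minus: "clinear Y \<Longrightarrow> clinear (\<lambda>x. x - Y x)"
  by (simp add: clinear_def cscale_diff_right)

lemma clinear_scaleR_op: "clinear Y \<Longrightarrow> clinear (\<lambda>x. r *\<^sub>R Y x)"
  by (simp add: clinear_def scaleR_cscale_commute scaleR_add_right)

lemma bounded_opD:
  assumes "bounded_op T"
  shows "clinear T" "\<exists>K>0. \<forall>x. norm (T x) \<le> K * norm x"
proof -
  show "clinear T" using assms bounded_op_def by blast
  obtain K where K: "\<forall>x. norm (T x) \<le> K * norm x" using assms bounded_op_def by blast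
  have "norm (T x) \<le> max K 1 * norm x" for x
    using K mult_right_mono[of K "max K 1" "norm x"] by (meson max.cobounded1 norm_ge_zero order_trans)
  then show "\<exists>K>0. \<forall>x. norm (T x) \<le> K * norm x" by (intro exI[of _ "max K 1"]) auto
qed

lemma bounded_opI: "clinear T \<Longrightarrow> (\<And>x. norm (T x) \<le> K * norm x) \<Longrightarrow> bounded_op T"
  unfolding bounded_op_def by blast

lemma bounded_op_bounded_linear:
  assumes "bounded_op T"
  shows "bounded_linear T"
proof -
  obtain K where K: "\<And>x. norm (T x) \<le> K * norm x" using assms bounded_op_def by blast
  have "linear T" using assms bounded_opD(1) clinear_linear by blast
  then show ?thesis
    using K by (intro bounded_linear_intro[where K=K]) (auto simp: linear_add linear_scale mult.commute)
qed

lemma bounded_op_comp: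
  assumes "bounded_op S" "bounded_op T"
  shows "bounded_op (\<lambda>x. S (T x))"
proof -
  obtain K where K: "K > 0" "\<And>x. norm (S x) \<le> K * norm x" using assms bounded_opD by blast
  obtain L where L: "\<And>x. norm (T x) \<le> L * norm x" using assms bounded_opD by blast
  have "norm (S (T x)) \<le> (K * L) * norm x" for x
  proof -
    have "norm (S (T x)) \<le> K * norm (T x)" by (rule K(2))
    also have "\<dots> \<le> K * (L * norm x)" using K(1) by (intro mult_left_mono L) simp
    finally show ?thesis by (simp add: mult.assoc)
  qed
  moreover have "clinear (\<lambda>x. S (T x))" using assms bounded_opD(1) clinear_comp by blast
  ultimately show ?thesis by (intro bounded_opI)
qed

lemma bounded_op_add:
  assumes "bounded_op S" "bounded_op T"
  shows "bounded_op (\<lambda>x. S x + T x)"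
proof -
  obtain K where K: "\<And>x. norm (S x) \<le> K * norm x" using bounded_opD[OF assms(1)] by blast
  obtain L where L: "\<And>x. norm (T x) \<le> L * norm x" using bounded_opD[OF assms(2)] by blast
  have "norm (S x + T x) \<le> (K + L) * norm x" for x
    using norm_triangle_ineq[of "S x" "T x"] K[of x] L[of x] by (simp add: algebra_simps)
  moreover have "clinear (\<lambda>x. S x + T x)"
    using bounded_opD(1)[OF assms(1)] bounded_opD(1)[OF assms(2)]
    unfolding clinear_def by (simp add: cscale_add_right algebra_simps)
  ultimately show ?thesis by (intro bounded_opI)
qed

lemma bounded_op_scaleR:
  assumes "bounded_op S"
  shows "bounded_op (\<lambda>x. t *\<^sub>R S x)"
proof -
  obtain K where K: "\<And>x. norm (S x) \<le> K * norm x" using bounded_opD[OF assms(1)] by blast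
  have "norm (t *\<^sub>R S x) \<le> (\<bar>t\<bar> * K) * norm x" for x
    using K[of x] by (simp add: mult.assoc mult_left_mono)
  then show ?thesis using bounded_opD(1)[OF assms] clinear_scaleR_op by (blast intro: bounded_opI)
qed

lemma bounded_op_ident: "bounded_op (\<lambda>x. x)"
  by (rule bounded_opI[OF clinear_ident, of 1]) simp

lemma bounded_op_zero: "bounded_op (\<lambda>x. 0)"
  by (rule bounded_opI[where K=0]) (auto simp: clinear_def)

lemma bounded_op_diff:
  assumes "bounded_op S" "bounded_op T"
  shows "bounded_op (\<lambda>x. S x - T x)"
  using bounded_op_add[OF assms(1) bounded_op_scaleR[OF assms(2), of "- 1"]] by simp

section \<open>The Riesz representation theorem\<close>

lemma parallelogram_law:
  fixes a b :: "'h::complex_hilbert"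
  shows "(norm (a - b))\<^sup>2 = 2 * (norm a)\<^sup>2 + 2 * (norm b)\<^sup>2 - (norm (a + b))\<^sup>2"
  by (simp add: power2_norm_eq_cinner cinner_add_left cinner_add_right cinner_diff_left cinner_diff_right)

lemma norm_diff_le_midpoint:
  fixes a b z :: "'h::complex_hilbert"
  assumes "d \<le> norm (z - (1/2) *\<^sub>R (a + b))" "0 \<le> d"
  shows "(norm (a - b))\<^sup>2 \<le> 2 * (norm (z - a))\<^sup>2 + 2 * (norm (z - b))\<^sup>2 - 4 * d\<^sup>2"
proof -
  have "(z - a) + (z - b) = 2 *\<^sub>R (z - (1/2) *\<^sub>R (a + b))" by (simp add: algebra_simps scaleR_2)
  then have "(2 * d)\<^sup>2 \<le> (norm ((z - a) + (z - b)))\<^sup>2" using assms by (intro power_mono) auto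
  then show ?thesis using parallelogram_law[of "z - a" "z - b"] by (simp add: power2_eq_square norm_minus_commute)
qed

lemma minimizing_sequence_Cauchy:
  fixes z :: "'h::complex_hilbert"
  assumes mid: "\<And>a b. a \<in> M \<Longrightarrow> b \<in> M \<Longrightarrow> (1/2) *\<^sub>R (a + b) \<in> M"
    and lower: "\<And>m. m \<in> M \<Longrightarrow> d \<le> norm (z - m)" and "0 \<le> d"
    and s: "\<And>n. s n \<in> M" "\<And>n. norm (z - s n) < d + inverse (real (Suc n))"
  shows "Cauchy s"
proof -
  have sq: "(norm (z - s n))\<^sup>2 \<le> d\<^sup>2 + (2 * d + 1) * inverse (real (Suc n))" for n
  proof -
    define e where "e = inverse (real (Suc n))"
    have e: "0 < e" "e \<le> 1" unfolding e_def by (auto simp: field_simps)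
    have "(norm (z - s n))\<^sup>2 \<le> (d + e)\<^sup>2"
      using s(2)[of n] e_def by (intro power_mono) auto
    also have "\<dots> = d\<^sup>2 + 2 * d * e + e * e" by (simp add: power2_eq_square algebra_simps)
    also have "\<dots> \<le> d\<^sup>2 + 2 * d * e + e * 1" using e by (intro add_left_mono mult_left_mono) auto
    finally show ?thesis unfolding e_def by (simp add: algebra_simps)
  qed
  have pair: "(norm (s n - s k))\<^sup>2 \<le> 2 * (2 * d + 1) * (inverse (real (Suc n)) + inverse (real (Suc k)))"
    for n k
    using norm_diff_le_midpoint[OF lower[OF mid[OF s(1) s(1)]] \<open>0 \<le> d\<close>, of n k] sq[of n] sq[of k]
    by (simp add: algebra_simps)
  show "Cauchy s"
  proof (rule CauchyI)
    fix e :: real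
    assume "0 < e"
    obtain N :: nat where N: "4 * (2 * d + 1) / e\<^sup>2 < real N" using reals_Archimedean2 by blast
    have "norm (s m - s n) < e" if "N \<le> m" "N \<le> n" for m n
    proof -
      have "inverse (real (Suc m)) \<le> inverse (real (Suc N))" "inverse (real (Suc n)) \<le> inverse (real (Suc N))"
        using that by (simp_all add: field_simps)
      then have "(norm (s m - s n))\<^sup>2 \<le> 2 * (2 * d + 1) * (2 * inverse (real (Suc N)))"
        using pair[of m n] \<open>0 \<le> d\<close> by (smt (verit) mult_left_mono)
      also have "\<dots> < e\<^sup>2"
      proof -
        have "4 * (2 * d + 1) < e\<^sup>2 * real (Suc N)"
          using N \<open>0 < e\<close> by (simp add: field_simps) (smt (verit) zero_less_power)
        then show ?thesis by (simp add: field_simps)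
      qed
      finally show ?thesis using \<open>0 < e\<close> by (simp add: power_less_imp_less_base less_le_not_le)
    qed
    then show "\<exists>M. \<forall>m\<ge>M. \<forall>n\<ge>M. norm (s m - s n) < e" by blast
  qed
qed

lemma closest_point_exists:
  fixes z :: "'h::complex_hilbert"
  assumes "m0 \<in> M" and mid: "\<And>a b. a \<in> M \<Longrightarrow> b \<in> M \<Longrightarrow> (1/2) *\<^sub>R (a + b) \<in> M"
    and closed: "\<And>s l. (\<forall>n. s n \<in> M) \<Longrightarrow> s \<longlonglongrightarrow> l \<Longrightarrow> l \<in> M"
  shows "\<exists>m\<in>M. \<forall>m'\<in>M. norm (z - m) \<le> norm (z - m')"
proof -
  define D where "D = (\<lambda>m. norm (z - m)) ` M"
  define d where "d = Inf D"
  have "D \<noteq> {}" using \<open>m0 \<in> M\<close> D_def by blast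
  have lower: "d \<le> norm (z - m)" if "m \<in> M" for m
    unfolding d_def D_def using that by (intro cInf_lower bdd_belowI[of _ 0]) auto
  have "0 \<le> d" unfolding d_def using \<open>D \<noteq> {}\<close> by (intro cInf_greatest) (auto simp: D_def)
  have "\<exists>m\<in>M. norm (z - m) < d + inverse (real (Suc n))" for n
    using cInf_lessD[OF \<open>D \<noteq> {}\<close>, of "d + inverse (real (Suc n))"] by (auto simp: d_def D_def)
  then obtain s where s: "\<And>n. s n \<in> M" "\<And>n. norm (z - s n) < d + inverse (real (Suc n))"
    by metis
  then have "Cauchy s" using minimizing_sequence_Cauchy[OF mid lower \<open>0 \<le> d\<close>] by blast
  then obtain l where l: "s \<longlonglongrightarrow> l" using Cauchy_convergent convergent_def by blast
  have "norm (z - l) \<le> d"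
  proof (rule tendsto_le[of sequentially])
    show "(\<lambda>n. d + inverse (real (Suc n))) \<longlonglongrightarrow> d" by (rule LIMSEQ_inverse_real_of_nat_add)
    show "(\<lambda>n. norm (z - s n)) \<longlonglongrightarrow> norm (z - l)" by (intro tendsto_intros l)
    show "\<forall>\<^sub>F n in sequentially. norm (z - s n) \<le> d + inverse (real (Suc n))"
      using s(2) less_imp_le by (intro always_eventually) blast
  qed simp
  then show ?thesis using closed s(1) l lower by force
qed

lemma representation_if_orthogonal_to_kernel:
  fixes f :: "'h::complex_hilbert \<Rightarrow> complex"
  assumes add: "\<And>x y. f (x + y) = f x + f y" and scale: "\<And>c x. f (cscale c x) = c * f x"
    and "f w \<noteq> 0" and orth: "\<And>u. f u = 0 \<Longrightarrow> cinner w u = 0"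
  shows "\<exists>v. \<forall>y. f y = cinner v y"
proof -
  have fdiff: "f (x - y) = f x - f y" for x y using add[of "x - y" y] by simp
  define N where "N = cinner w w"
  have "N \<noteq> 0" using \<open>f w \<noteq> 0\<close> add[of 0 0] cinner_self_eq_zero unfolding N_def by force
  have "f y = cinner (cscale (cnj (f w / N)) w) y" for y
  proof -
    have "cinner w (cscale (f y) w - cscale (f w) y) = 0" by (rule orth) (simp add: fdiff scale)
    then have "f y * N = f w * cinner w y"
      by (simp add: cinner_diff_right cinner_cscale_right N_def)
    then show ?thesis using \<open>N \<noteq> 0\<close> by (simp add: cinner_cscale_left field_simps)
  qed
  then show ?thesis by blast
qed

lemma riesz_representation:
  fixes f :: "'h::complex_hilbert \<Rightarrow> complex"
  assumes add: "\<And>x y. f (x + y) = f x + f y" and scale: "\<And>c x. f (cscale c x) = c * f x"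
    and bound: "\<And>x. cmod (f x) \<le> K * norm x"
  shows "\<exists>w. \<forall>y. f y = cinner w y"
proof (cases "\<forall>y. f y = 0")
  case True
  then show ?thesis by (intro exI[of _ 0]) simp
next
  case False
  then obtain z where "f z \<noteq> 0" by blast
  have f0: "f 0 = 0" using add[of 0 0] by simp
  have fdiff: "f (x - y) = f x - f y" for x y using add[of "x - y" y] by simp
  define M where "M = {y. f y = 0}"
  have "\<exists>m\<in>M. \<forall>m'\<in>M. norm (z - m) \<le> norm (z - m')"
  proof (rule closest_point_exists)
    show "0 \<in> M" using f0 M_def by simp
    show "(1/2) *\<^sub>R (a + b) \<in> M" if "a \<in> M" "b \<in> M" for a b
      using that by (simp add: M_def scaleR_cscale scale add)
    show "l \<in> M" if "\<forall>n. s n \<in> M" "s \<longlonglongrightarrow> l" for s l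
    proof -
      have "cmod (f l) \<le> K * norm (s n - l)" for n
        using bound[of "s n - l"] that(1) by (simp add: fdiff M_def)
      moreover have "(\<lambda>n. K * norm (s n - l)) \<longlonglongrightarrow> K * 0"
        using that(2) by (intro tendsto_intros) (simp add: LIM_zero_iff tendsto_norm_zero)
      ultimately have "cmod (f l) \<le> 0"
        by (intro tendsto_le[OF _ _ tendsto_const, of sequentially]) auto
      then show ?thesis by (simp add: M_def)
    qed
  qed
  then obtain m where "m \<in> M" and closest: "\<And>m'. m' \<in> M \<Longrightarrow> norm (z - m) \<le> norm (z - m')"
    by blast
  define w0 where "w0 = z - m"
  have "f w0 = f z" using \<open>m \<in> M\<close> by (simp add: w0_def fdiff M_def)
  have orth: "cinner w0 u = 0" if "u \<in> M" for u
  proof (rule orthogonal_if_norm_minimal)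
    fix c
    have "m - cscale c u \<in> M" using \<open>m \<in> M\<close> that by (simp add: M_def fdiff scale)
    then show "norm w0 \<le> norm (w0 + cscale c u)"
      using closest[of "m - cscale c u"] by (simp add: w0_def algebra_simps)
  qed
  show ?thesis
    using representation_if_orthogonal_to_kernel[OF add scale, of w0] \<open>f w0 = f z\<close> \<open>f z \<noteq> 0\<close> orth
    by (simp add: M_def)
qed

definition is_adj :: "('h::complex_hilbert \<Rightarrow> 'h) \<Rightarrow> ('h \<Rightarrow> 'h) \<Rightarrow> bool" where
  "is_adj S T \<longleftrightarrow> (\<forall>x y. cinner (S x) y = cinner x (T y))"

lemma is_adjD: "is_adj S T \<Longrightarrow> cinner (S x) y = cinner x (T y)"
  by (simp add: is_adj_def)

lemma is_adjD_right: "is_adj S T \<Longrightarrow> cinner y (S x) = cinner (T y) x"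
  by (metis cinner_cnj is_adj_def)

lemma is_adj_unique: "is_adj S1 T \<Longrightarrow> is_adj S2 T \<Longrightarrow> S1 = S2"
  by (rule ext, rule cinner_eqI) (simp add: is_adj_def)

lemma adj_eqI: "is_adj S T \<Longrightarrow> adj T = S"
proof -
  assume "is_adj S T"
  then have "\<exists>S. \<forall>x y. cinner (S x) y = cinner x (T y)" by (auto simp: is_adj_def)
  then have "is_adj (adj T) T" unfolding adj_def is_adj_def by (rule someI_ex)
  then show ?thesis using \<open>is_adj S T\<close> is_adj_unique by blast
qed

lemma is_adj_clinear:
  assumes "is_adj S T" "clinear T"
  shows "clinear S"
  unfolding clinear_def
proof (intro conjI allI)
  show "S (x + y) = S x + S y" for x y
    by (rule cinner_eqI) (simp add: is_adjD[OF assms(1)] cinner_add_left)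
  show "S (cscale c x) = cscale c (S x)" for c x
    by (rule cinner_eqI) (simp add: is_adjD[OF assms(1)] cinner_cscale_left)
qed

lemma is_adj_bounded:
  assumes "is_adj S T" "bounded_op T"
  shows "bounded_op S"
proof -
  obtain K where K: "K > 0" "\<And>x. norm (T x) \<le> K * norm x" using bounded_opD[OF assms(2)] by blast
  have "norm (S x) \<le> K * norm x" for x
  proof (cases "S x = 0")
    case True
    then show ?thesis using K by simp
  next
    case False
    have "(norm (S x))\<^sup>2 = Re (cinner x (T (S x)))"
      by (simp add: power2_norm_eq_cinner is_adjD[OF assms(1)])
    also have "\<dots> \<le> norm x * norm (T (S x))" by (metis cmod_cinner_le complex_Re_le_cmod order_trans)
    also have "\<dots> \<le> norm x * (K * norm (S x))" using K by (simp add: mult_left_mono)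
    finally have "norm (S x) * norm (S x) \<le> (K * norm x) * norm (S x)"
      by (simp add: power2_eq_square algebra_simps)
    then show ?thesis using False by simp
  qed
  then show ?thesis using is_adj_clinear assms bounded_opD(1) bounded_opI by metis
qed

lemma is_adj_adj:
  assumes "bounded_op T"
  shows "is_adj (adj T) T"
proof -
  obtain K where K: "\<And>x. norm (T x) \<le> K * norm x" using bounded_opD[OF assms] by blast
  have "\<exists>w. \<forall>y. cinner x (T y) = cinner w y" for x
  proof (rule riesz_representation[where K="norm x * K"])
    show "cinner x (T (a + b)) = cinner x (T a) + cinner x (T b)" for a b
      using clinearD[OF bounded_opD(1)[OF assms]] by (simp add: cinner_add_right)
    show "cinner x (T (cscale c a)) = c * cinner x (T a)" for c a
      using clinearD[OF bounded_opD(1)[OF assms]] by (simp add: cinner_cscale_right)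
    show "cmod (cinner x (T a)) \<le> norm x * K * norm a" for a
      using cmod_cinner_le[of x "T a"] K[of a]
      by (metis mult.assoc mult_left_mono norm_ge_zero order_trans)
  qed
  then obtain S where "\<forall>x y. cinner x (T y) = cinner (S x) y" by metis
  then have "is_adj S T" by (simp add: is_adj_def)
  then show ?thesis using adj_eqI by metis
qed

lemma adj_bounded: "bounded_op T \<Longrightarrow> bounded_op (adj T)"
  using is_adj_adj is_adj_bounded by blast

lemma is_adj_comp: "is_adj S T \<Longrightarrow> is_adj S' T' \<Longrightarrow> is_adj (\<lambda>x. S' (S x)) (\<lambda>y. T (T' y))"
  by (simp add: is_adj_def)

lemma is_adj_scaleR: "is_adj S T \<Longrightarrow> is_adj (\<lambda>x. r *\<^sub>R S x) (\<lambda>x. r *\<^sub>R T x)"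
  by (simp add: is_adj_def cinner_scaleR_left cinner_scaleR_right)

lemma is_adj_id_minus: "is_adj S T \<Longrightarrow> is_adj (\<lambda>x. x - S x) (\<lambda>x. x - T x)"
  by (simp add: is_adj_def cinner_diff_left cinner_diff_right)

lemma is_adj_right_inverse:
  assumes "is_adj S T" "\<And>x. T (V x) = x" "\<And>x. S (W x) = x"
  shows "is_adj W V"
  unfolding is_adj_def
proof (intro allI)
  fix x y
  have "cinner (W x) y = cinner (W x) (T (V y))" using assms(2) by simp
  also have "\<dots> = cinner (S (W x)) (V y)" using is_adjD[OF assms(1)] by simp
  finally show "cinner (W x) y = cinner x (V y)" using assms(3) by simp
qed

lemma positive_form_is_adj:
  assumes "clinear A" "\<And>x. Im (cinner x (A x)) = 0"
  shows "is_adj A A"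
  unfolding is_adj_def using positive_form_hermitian[OF assms] by (metis cinner_cnj)

lemma invertible_opD:
  assumes "invertible_op A"
  obtains W where "bounded_op W" "\<And>x. W (A x) = x" "\<And>x. A (W x) = x"
  using assms unfolding invertible_op_def by (metis comp_apply id_apply)

lemma invertible_opI:
  "bounded_op A \<Longrightarrow> bounded_op W \<Longrightarrow> (\<And>x. W (A x) = x) \<Longrightarrow> (\<And>x. A (W x) = x) \<Longrightarrow> invertible_op A"
  unfolding invertible_op_def by (intro conjI exI[of _ W]) auto

lemma invertible_op_bounded: "invertible_op A \<Longrightarrow> bounded_op A"
  unfolding invertible_op_def by blast

lemma invertible_op_comp:
  assumes "invertible_op S" "invertible_op T"
  shows "invertible_op (\<lambda>x. S (T x))"
proof -
  obtain V where V: "bounded_op V" "\<And>x. V (S x) = x" "\<And>x. S (V x) = x"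
    using invertible_opD[OF assms(1)] by blast
  obtain W where W: "bounded_op W" "\<And>x. W (T x) = x" "\<And>x. T (W x) = x"
    using invertible_opD[OF assms(2)] by blast
  have "bounded_op (\<lambda>x. S (T x))" "bounded_op (\<lambda>x. W (V x))"
    using assms V(1) W(1) invertible_op_bounded bounded_op_comp by blast+
  from invertible_opI[OF this] show ?thesis using V W by simp
qed

lemma invertible_op_scaleR:
  assumes "invertible_op T" "t \<noteq> 0"
  shows "invertible_op (\<lambda>x. t *\<^sub>R T x)"
proof -
  obtain W where W: "bounded_op W" "\<And>x. W (T x) = x" "\<And>x. T (W x) = x"
    using invertible_opD[OF assms(1)] by blast
  have "bounded_op T" using assms(1) invertible_op_bounded by blast
  then have "clinear T" "clinear W" using W(1) bounded_opD(1) by blast+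
  have "bounded_op (\<lambda>x. t *\<^sub>R T x)" "bounded_op (\<lambda>x. (1 / t) *\<^sub>R W x)"
    using \<open>bounded_op T\<close> W(1) bounded_op_scaleR by blast+
  from invertible_opI[OF this] show ?thesis
    using assms(2) W \<open>clinear T\<close> \<open>clinear W\<close> by (simp add: clinear_scaleR)
qed

lemma invertible_op_adj:
  assumes "invertible_op T"
  shows "invertible_op (adj T)"
proof -
  obtain W where W: "bounded_op W" "\<And>x. W (T x) = x" "\<And>x. T (W x) = x"
    using invertible_opD[OF assms] by blast
  have T: "is_adj (adj T) T" and "bounded_op T" using is_adj_adj invertible_op_bounded assms by blast+
  have "is_adj (adj W) W" using is_adj_adj[OF W(1)] .
  moreover have "bounded_op (adj T)" "bounded_op (adj W)"
    using \<open>bounded_op T\<close> W(1) adj_bounded by blast+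
  moreover have "adj W (adj T x) = x" "adj T (adj W x) = x" for x
    using T \<open>is_adj (adj W) W\<close> W by (rule_tac cinner_eqI; simp add: is_adjD)+
  ultimately show ?thesis by (intro invertible_opI)
qed

lemma unitary_opI:
  assumes "bounded_op U" "\<And>x. adj U (U x) = x" "\<And>x. U (V x) = x"
  shows "unitary_op U"
proof -
  have "U (adj U x) = x" for x using assms(2,3) by metis
  then show ?thesis unfolding unitary_op_def using assms by auto
qed

lemma unitary_op_invertible: "unitary_op U \<Longrightarrow> invertible_op U"
  unfolding unitary_op_def invertible_op_def using adj_bounded by blast

lemma funpow_clinear:
  fixes Y :: "'a::complex_vec \<Rightarrow> 'a"
  shows "clinear Y \<Longrightarrow> clinear (Y ^^ k)"
  by (induction k) (auto simp: clinear_def)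

lemma funpow_norm_le:
  fixes Y :: "'a::real_normed_vector \<Rightarrow> 'a"
  assumes "\<And>x. norm (Y x) \<le> s * norm x" "0 \<le> s"
  shows "norm ((Y ^^ k) x) \<le> s ^ k * norm x"
proof (induction k arbitrary: x)
  case 0
  then show ?case by simp
next
  case (Suc k)
  have "norm ((Y ^^ Suc k) x) \<le> s * norm ((Y ^^ k) x)" using assms(1) by simp
  also have "\<dots> \<le> s * (s ^ k * norm x)" using Suc assms(2) by (simp add: mult_left_mono)
  finally show ?case by (simp add: mult.assoc)
qed

text \<open>The inverse is the Neumann series \<Sum> Y^k.\<close>

lemma invertible_op_id_minus:
  assumes cl: "clinear Y" and bound: "\<And>x. norm (Y x) \<le> s * norm x" and s: "0 \<le> s" "s < 1"
  shows "invertible_op (\<lambda>x. x - Y x)"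
proof -
  have "bounded_linear Y" using bounded_op_bounded_linear bounded_opI[OF cl bound] by blast
  have pow: "norm ((Y ^^ k) x) \<le> s ^ k * norm x" for k x using funpow_norm_le[OF bound s(1)] .
  have geom: "summable (\<lambda>k. s ^ k * norm x)" for x
    using s by (intro summable_mult2 summable_geometric) simp
  have summ: "summable (\<lambda>k. (Y ^^ k) x)" for x
    by (rule summable_comparison_test[OF _ geom]) (use pow in auto)
  define N where "N x = (\<Sum>k. (Y ^^ k) x)" for x
  have YN: "Y (N x) = (\<Sum>k. (Y ^^ Suc k) x)" for x
    unfolding N_def using bounded_linear.suminf[OF \<open>bounded_linear Y\<close> summ] by simp
  have right: "N x - Y (N x) = x" for x
    using suminf_split_head[OF summ[of x]] YN[of x] by (simp add: N_def)
  have left: "N (x - Y x) = x" for x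
  proof -
    have "(Y ^^ k) (x - Y x) = (Y ^^ k) x - (Y ^^ Suc k) x" for k
      using clinear_diff[OF funpow_clinear[OF cl]] by (simp add: funpow_swap1)
    then have "N (x - Y x) = (\<Sum>k. (Y ^^ k) x - (Y ^^ Suc k) x)" by (simp add: N_def)
    also have "\<dots> = N x - (\<Sum>k. (Y ^^ Suc k) x)"
      unfolding N_def using summ[of x] summable_Suc_iff[of "\<lambda>k. (Y ^^ k) x"] by (subst suminf_diff) auto
    also have "\<dots> = x" using right YN by metis
    finally show ?thesis .
  qed
  have "clinear N" unfolding clinear_def
  proof (intro conjI allI)
    show "N (x + y) = N x + N y" for x y
      unfolding N_def using suminf_add[OF summ[of x] summ[of y]] clinearD[OF funpow_clinear[OF cl]] by simp
    show "N (cscale c x) = cscale c (N x)" for c x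
      unfolding N_def using bounded_linear.suminf[OF bounded_linear_cscale summ[of x], of c]
        clinearD[OF funpow_clinear[OF cl]] by simp
  qed
  moreover have "norm (N x) \<le> (1 / (1 - s)) * norm x" for x
  proof -
    have "norm (N x) \<le> (\<Sum>k. s ^ k * norm x)" unfolding N_def by (rule norm_suminf_le[OF pow geom])
    also have "\<dots> = (1 / (1 - s)) * norm x"
      using suminf_mult2[of "\<lambda>k. s ^ k" "norm x"] s by (simp add: summable_geometric suminf_geometric)
    finally show ?thesis .
  qed
  moreover have "bounded_op (\<lambda>x. x - Y x)"
    using bounded_op_diff[OF bounded_op_ident bounded_opI[OF cl bound]] .
  ultimately show ?thesis using left right bounded_opI by (metis invertible_opI)
qed

section \<open>Positive operators and their square roots\<close>

definition positive_op :: "('h::complex_hilbert \<Rightarrow> 'h) \<Rightarrow> bool" where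
  "positive_op A \<longleftrightarrow> bounded_op A \<and> (\<forall>x. Im (cinner x (A x)) = 0 \<and> 0 \<le> Re (cinner x (A x)))"

lemma is_adj_self_Im: "is_adj A A \<Longrightarrow> Im (cinner x (A x)) = 0"
  by (metis cinner_cnj cnj.sel(2) is_adjD neg_equal_zero)

text \<open>For self-adjoint B of norm r < 1 the iterates Y_0 = 0, Y_(n+1) = (B + Y_n^2) / 2 commute
  with each other, their successive differences shrink geometrically with ratio
  s = 1 - sqrt (1 - r) (the fixed point of s = (r + s^2) / 2), and their limit Y solves
  Y = (B + Y^2) / 2, i.e. (1 - Y)^2 = 1 - B.\<close>

primrec sqrt_iter :: "('h::complex_hilbert \<Rightarrow> 'h) \<Rightarrow> nat \<Rightarrow> 'h \<Rightarrow> 'h" where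
  "sqrt_iter B 0 = (\<lambda>x. 0)"
| "sqrt_iter B (Suc n) = (\<lambda>x. (1/2) *\<^sub>R (B x + sqrt_iter B n (sqrt_iter B n x)))"

lemma sqrt_iter_clinear: "clinear B \<Longrightarrow> clinear (sqrt_iter B n)"
  by (induction n) (simp_all add: clinear_def scaleR_add_right scaleR_cscale_commute cscale_add_right)

lemma sqrt_iter_commute:
  assumes "clinear B" "clinear C" "\<And>x. C (B x) = B (C x)"
  shows "C (sqrt_iter B n x) = sqrt_iter B n (C x)"
  using assms by (induction n arbitrary: x) (simp_all add: clinear_0 clinear_scaleR clinearD)

lemma sqrt_iter_commute_iter:
  assumes "clinear B"
  shows "sqrt_iter B m (sqrt_iter B n x) = sqrt_iter B n (sqrt_iter B m x)"
proof -
  have "sqrt_iter B m (B x) = B (sqrt_iter B m x)" for x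
    using sqrt_iter_commute[OF assms assms] by simp
  from sqrt_iter_commute[OF assms sqrt_iter_clinear[OF assms] this] show ?thesis by simp
qed

lemma sqrt_iter_is_adj: "is_adj B B \<Longrightarrow> is_adj (sqrt_iter B n) (sqrt_iter B n)"
  by (induction n)
    (simp_all add: is_adj_def cinner_scaleR_left cinner_scaleR_right cinner_add_left cinner_add_right)

lemma sqrt_iter_norm_le:
  assumes "\<And>x. norm (B x) \<le> r * norm x" "0 \<le> s" "r + s\<^sup>2 \<le> 2 * s"
  shows "norm (sqrt_iter B n x) \<le> s * norm x"
proof (induction n arbitrary: x)
  case 0
  then show ?case using assms by simp
next
  case (Suc n)
  have "norm (sqrt_iter B (Suc n) x) \<le> (1/2) * (norm (B x) + norm (sqrt_iter B n (sqrt_iter B n x)))"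
    by (simp add: norm_triangle_ineq)
  also have "\<dots> \<le> (1/2) * (r * norm x + s * (s * norm x))"
    using Suc[of "sqrt_iter B n x"] mult_left_mono[OF Suc[of x] assms(2)] assms(1)[of x] by simp
  also have "\<dots> = (1/2) * (r + s\<^sup>2) * norm x" by (simp add: power2_eq_square algebra_simps)
  also have "\<dots> \<le> (1/2) * (2 * s) * norm x"
    using mult_right_mono[OF assms(3) norm_ge_zero[of x]] by (simp add: algebra_simps)
  finally show ?case by simp
qed

lemma sqrt_iter_step_norm_le:
  fixes B :: "'h::complex_hilbert \<Rightarrow> 'h"
  assumes cl: "clinear B" and bound: "\<And>x. norm (B x) \<le> r * norm x"
    and s: "0 \<le> s" "r + s\<^sup>2 \<le> 2 * s" "r \<le> 2"
  shows "norm (sqrt_iter B (Suc n) x - sqrt_iter B n x) \<le> s ^ n * norm x"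
proof (induction n arbitrary: x)
  case 0
  have "norm ((1/2) *\<^sub>R B x) \<le> (1/2) * (r * norm x)" using bound[of x] by simp
  also have "\<dots> \<le> norm x" using mult_right_mono[OF s(3) norm_ge_zero[of x]] by simp
  finally show ?case by simp
next
  case (Suc n)
  let ?Y = "sqrt_iter B" and ?D = "sqrt_iter B (Suc n) x - sqrt_iter B n x"
  have unfold: "?Y (Suc m) x = (1/2) *\<^sub>R (B x + ?Y m (?Y m x))" for m
    by (rule fun_cong[OF sqrt_iter.simps(2)])
  have half: "norm ((1/2) *\<^sub>R (a + b)) \<le> (1/2) * (norm a + norm b)" for a b :: 'h
    by (simp add: norm_triangle_ineq)
  have "?Y (Suc (Suc n)) x - ?Y (Suc n) x = (1/2) *\<^sub>R (?Y (Suc n) (?Y (Suc n) x) - ?Y n (?Y n x))"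
    using unfold[of "Suc n"] unfold[of n] by (simp del: sqrt_iter.simps(2) add: algebra_simps)
  also have "\<dots> = (1/2) *\<^sub>R (?Y (Suc n) ?D + ?Y n ?D)"
    using sqrt_iter_commute_iter[OF cl, of "Suc n" n x]
    by (simp del: sqrt_iter.simps(2) add: clinear_diff[OF sqrt_iter_clinear[OF cl]])
  finally have "norm (?Y (Suc (Suc n)) x - ?Y (Suc n) x) \<le> (1/2) * (norm (?Y (Suc n) ?D) + norm (?Y n ?D))"
    using half by metis
  also have "\<dots> \<le> (1/2) * (s * norm ?D + s * norm ?D)"
    by (intro mult_left_mono add_mono sqrt_iter_norm_le[OF bound s(1,2)]) auto
  also have "\<dots> \<le> s * (s ^ n * norm x)" using Suc s(1) by (simp add: mult_left_mono)
  finally show ?case by simp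
qed

lemma LIMSEQ_apply_equibounded:
  fixes S :: "nat \<Rightarrow> 'a::real_normed_vector \<Rightarrow> 'b::real_normed_vector"
  assumes "\<And>n. linear (S n)" "\<And>n x. norm (S n x) \<le> K * norm x"
    and "(\<lambda>n. S n y) \<longlonglongrightarrow> Y" "x \<longlonglongrightarrow> y"
  shows "(\<lambda>n. S n (x n)) \<longlonglongrightarrow> Y"
proof -
  have "(\<lambda>n. S n (x n - y)) \<longlonglongrightarrow> 0"
    using assms(2) by (intro tendsto_0_le[OF LIM_zero[OF assms(4)], of _ K] always_eventually)
      (simp add: mult.commute)
  from tendsto_add[OF this assms(3)] show ?thesis by (simp add: linear_diff[OF assms(1)])
qed

lemma clinear_LIMSEQ:
  fixes S :: "nat \<Rightarrow> 'a::complex_normed_vec \<Rightarrow> 'b::complex_normed_vec"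
  assumes cl: "\<And>n. clinear (S n)" and conv: "\<And>x. (\<lambda>n. S n x) \<longlonglongrightarrow> Y x"
  shows "clinear Y"
  unfolding clinear_def
proof (intro conjI allI)
  show "Y (x + y) = Y x + Y y" for x y
    using tendsto_add[OF conv[of x] conv[of y]] conv[of "x + y"] by (simp add: clinearD[OF cl] LIMSEQ_unique)
  show "Y (cscale c x) = cscale c (Y x)" for c x
    using bounded_linear.tendsto[OF bounded_linear_cscale conv[of x], of c] conv[of "cscale c x"]
    by (simp add: clinearD[OF cl] LIMSEQ_unique)
qed

lemma is_adj_LIMSEQ:
  assumes "\<And>n. is_adj (S n) (T n)"
    and "\<And>x. (\<lambda>n. S n x) \<longlonglongrightarrow> Y x" "\<And>x. (\<lambda>n. T n x) \<longlonglongrightarrow> Z x"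
  shows "is_adj Y Z"
  unfolding is_adj_def
proof (intro allI)
  fix x y
  show "cinner (Y x) y = cinner x (Z y)"
    using bounded_linear.tendsto[OF bounded_linear_cinner_left assms(2)[of x], of y]
      bounded_linear.tendsto[OF bounded_linear_cinner_right assms(3)[of y], of x]
      is_adjD[OF assms(1)] by (simp add: LIMSEQ_unique)
qed

lemma sqrt_iter_converges:
  fixes B :: "'h::complex_hilbert \<Rightarrow> 'h"
  assumes cl: "clinear B" and sa: "is_adj B B" and bound: "\<And>x. norm (B x) \<le> r * norm x"
    and r: "0 \<le> r" "r < 1"
  obtains Y where "clinear Y" "is_adj Y Y" "\<And>x. norm (Y x) \<le> norm x"
    "\<And>x. (\<lambda>n. sqrt_iter B n x) \<longlonglongrightarrow> Y x"
proof -
  define s where "s = 1 - sqrt (1 - r)"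
  have s: "0 \<le> s" "s < 1" "r + s\<^sup>2 \<le> 2 * s" using r by (simp_all add: s_def power2_eq_square algebra_simps)
  define D where "D k x = sqrt_iter B (Suc k) x - sqrt_iter B k x" for k x
  have "summable (\<lambda>k. s ^ k * norm x)" for x :: 'h using s by (intro summable_mult2 summable_geometric) simp
  then have summ: "summable (\<lambda>k. D k x)" for x
    using sqrt_iter_step_norm_le[OF cl bound s(1,3)] r
    by (intro summable_comparison_test[of "\<lambda>k. D k x" "\<lambda>k. s ^ k * norm x"]) (auto simp: D_def)
  have "sqrt_iter B n x = (\<Sum>k<n. D k x)" for n x
    by (induction n) (simp_all add: D_def del: sqrt_iter.simps(2))
  then have conv: "(\<lambda>n. sqrt_iter B n x) \<longlonglongrightarrow> (\<Sum>k. D k x)" for x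
    using summable_LIMSEQ[OF summ] by presburger
  define Y where "Y = (\<lambda>x. \<Sum>k. D k x)"
  have "clinear Y" unfolding Y_def using clinear_LIMSEQ[OF sqrt_iter_clinear[OF cl] conv] .
  moreover have "is_adj Y Y" unfolding Y_def using is_adj_LIMSEQ[OF sqrt_iter_is_adj[OF sa] conv conv] .
  moreover have "norm (Y x) \<le> norm x" for x
    using sqrt_iter_norm_le[OF bound, of 1] r conv[of x]
    by (intro tendsto_le[of sequentially _ _ "\<lambda>n. norm (sqrt_iter B n x)"]) (auto intro: tendsto_intros simp: Y_def)
  ultimately show ?thesis using that conv unfolding Y_def by blast
qed

lemma sqrt_id_minus:
  fixes B :: "'h::complex_hilbert \<Rightarrow> 'h"
  assumes cl: "clinear B" and sa: "is_adj B B" and bound: "\<And>x. norm (B x) \<le> r * norm x"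
    and r: "0 \<le> r" "r < 1"
  obtains R where "bounded_op R" "is_adj R R" "\<And>x. R (R x) = x - B x"
proof -
  obtain Y where Y: "clinear Y" "is_adj Y Y" "\<And>x. norm (Y x) \<le> norm x"
    and conv: "\<And>x. (\<lambda>n. sqrt_iter B n x) \<longlonglongrightarrow> Y x"
    using sqrt_iter_converges[OF assms] by blast
  have fixpoint: "Y x = (1/2) *\<^sub>R (B x + Y (Y x))" for x
  proof -
    have "(\<lambda>n. sqrt_iter B n (sqrt_iter B n x)) \<longlonglongrightarrow> Y (Y x)"
      using sqrt_iter_norm_le[OF bound, of 1] r
      by (intro LIMSEQ_apply_equibounded[where K=1, OF clinear_linear[OF sqrt_iter_clinear[OF cl]] _ conv conv])
        simp
    then have "(\<lambda>n. sqrt_iter B (Suc n) x) \<longlonglongrightarrow> (1/2) *\<^sub>R (B x + Y (Y x))"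
      by (simp del: sqrt_iter.simps(1)) (intro tendsto_intros)
    then show ?thesis using LIMSEQ_Suc[OF conv[of x]] LIMSEQ_unique by blast
  qed
  define R where "R x = x - Y x" for x
  have "norm (R x) \<le> 2 * norm x" for x
    unfolding R_def using norm_triangle_ineq4[of x "Y x"] Y(3)[of x] by simp
  then have "bounded_op R" unfolding R_def using clinear_id_minus[OF Y(1)] by (intro bounded_opI)
  moreover have "is_adj R R" unfolding R_def using is_adj_id_minus[OF Y(2)] .
  moreover have "R (R x) = x - B x" for x
  proof -
    have "R (R x) = x - 2 *\<^sub>R Y x + Y (Y x)" by (simp add: R_def clinear_diff[OF Y(1)] scaleR_2)
    also have "2 *\<^sub>R Y x = B x + Y (Y x)" using arg_cong[OF fixpoint[of x], of "scaleR 2"] by simp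
    finally show ?thesis by simp
  qed
  ultimately show ?thesis using that by blast
qed

lemma positive_contraction_norm_sq_le:
  assumes cl: "clinear A" and sa: "is_adj A A" and pos: "\<And>x. 0 \<le> Re (cinner x (A x))"
    and contr: "\<And>x. norm (A x) \<le> norm x"
  shows "(norm (A x))\<^sup>2 \<le> Re (cinner x (A x))"
proof (cases "A x = 0")
  case True
  then show ?thesis using pos by simp
next
  case False
  have "cinner x (A (A x)) = complex_of_real ((norm (A x))\<^sup>2)"
    using is_adjD[OF sa, of x "A x"] cinner_self_eq_norm by metis
  then have "((norm (A x))\<^sup>2)\<^sup>2 = (cmod (cinner x (A (A x))))\<^sup>2" by (simp only: norm_of_real) simp
  also have "\<dots> \<le> Re (cinner x (A x)) * Re (cinner (A x) (A (A x)))"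
    using positive_form_Cauchy_Schwarz[OF cl is_adj_self_Im[OF sa] pos] .
  also have "\<dots> \<le> Re (cinner x (A x)) * (norm (A x))\<^sup>2"
  proof (rule mult_left_mono[OF _ pos])
    have "Re (cinner (A x) (A (A x))) \<le> norm (A x) * norm (A (A x))"
      by (metis cmod_cinner_le complex_Re_le_cmod order_trans)
    also have "\<dots> \<le> (norm (A x))\<^sup>2" using contr by (simp add: power2_eq_square mult_left_mono)
    finally show "Re (cinner (A x) (A (A x))) \<le> (norm (A x))\<^sup>2" .
  qed
  finally have "(norm (A x))\<^sup>2 * (norm (A x))\<^sup>2 \<le> Re (cinner x (A x)) * (norm (A x))\<^sup>2"
    by (simp add: power2_eq_square[of "(norm (A x))\<^sup>2"])
  moreover have "(norm (A x))\<^sup>2 > 0" using False by simp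
  ultimately show ?thesis by (rule mult_right_le_imp_le)
qed

lemma sqrt_coercive_contraction:
  assumes cl: "clinear A" and sa: "is_adj A A" and contr: "\<And>x. norm (A x) \<le> norm x"
    and m: "0 < m" "m \<le> 1" and coercive: "\<And>x. m * (norm x)\<^sup>2 \<le> Re (cinner x (A x))"
  obtains R where "bounded_op R" "is_adj R R" "\<And>x. R (R x) = A x"
proof -
  define B where "B x = x - A x" for x
  have pos: "0 \<le> Re (cinner x (A x))" for x using coercive[of x] m(1) by (smt (verit) zero_le_mult_iff zero_le_power2)
  have "norm (B x) \<le> sqrt (1 - m) * norm x" for x
  proof -
    have "cinner (A x) x = cinner x (A x)" using is_adjD[OF sa] by simp
    then have "(norm (B x))\<^sup>2 = (norm x)\<^sup>2 - 2 * Re (cinner x (A x)) + (norm (A x))\<^sup>2"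
      unfolding B_def power2_norm_eq_cinner by (simp add: cinner_diff_left cinner_diff_right)
    also have "\<dots> \<le> (1 - m) * (norm x)\<^sup>2"
      using positive_contraction_norm_sq_le[OF cl sa pos contr, of x] coercive[of x] by (simp add: algebra_simps)
    finally have "norm (B x) \<le> sqrt ((1 - m) * (norm x)\<^sup>2)" by (rule real_le_rsqrt)
    then show ?thesis by (simp add: real_sqrt_mult)
  qed
  moreover have "clinear B" "is_adj B B"
    unfolding B_def using clinear_id_minus[OF cl] is_adj_id_minus[OF sa] by auto
  ultimately obtain R where "bounded_op R" "is_adj R R" "\<And>x. R (R x) = x - B x"
    using sqrt_id_minus[of B "sqrt (1 - m)"] m by auto
  then show ?thesis using that by (simp add: B_def)
qed

lemma invertible_op_if_square_invertible:
  assumes R: "bounded_op R" and "invertible_op A" and square: "\<And>x. R (R x) = A x"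
  shows "invertible_op R"
proof -
  obtain W where W: "bounded_op W" "\<And>x. W (A x) = x" "\<And>x. A (W x) = x"
    using invertible_opD[OF assms(2)] by blast
  have "R (W (R x)) = x" for x
  proof -
    have "R (W (R x)) = W (A (R (W (R x))))" using W(2) by simp
    also have "A (R (W (R x))) = R (A (W (R x)))" using square by metis
    finally show ?thesis using W square by simp
  qed
  with invertible_opI[OF R bounded_op_comp[OF R W(1)]] show ?thesis using W(3) square by metis
qed

lemma positive_invertible_op_sqrt:
  assumes "positive_op A" "invertible_op A"
  obtains R where "is_adj R R" "invertible_op R" "\<And>x. R (R x) = A x"
proof -
  have "bounded_op A" and pos: "\<And>x. Im (cinner x (A x)) = 0" "\<And>x. 0 \<le> Re (cinner x (A x))"
    using assms(1) unfolding positive_op_def by auto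
  then have "clinear A" using bounded_opD(1) by blast
  obtain K where K: "K > 0" "\<And>x. norm (A x) \<le> K * norm x" using bounded_opD[OF \<open>bounded_op A\<close>] by blast
  obtain W where W: "bounded_op W" "\<And>x. W (A x) = x" using invertible_opD[OF assms(2)] by blast
  obtain L where L: "L > 0" "\<And>x. norm (W x) \<le> L * norm x" using bounded_opD[OF W(1)] by blast
  define A' where "A' x = (1 / K) *\<^sub>R A x" for x
  have cl': "clinear A'" unfolding A'_def using clinear_scaleR_op[OF \<open>clinear A\<close>] .
  have sa': "is_adj A' A'"
    using positive_form_is_adj[OF cl'] pos(1) by (simp add: A'_def cinner_scaleR_right)
  have pos': "0 \<le> Re (cinner x (A' x))" for x using pos(2)[of x] K(1) by (simp add: A'_def cinner_scaleR_right)
  have contr': "norm (A' x) \<le> norm x" for x using K by (simp add: A'_def field_simps)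
  define m where "m = min (1 / (L * K)\<^sup>2) 1"
  have coercive: "m * (norm x)\<^sup>2 \<le> Re (cinner x (A' x))" for x
  proof -
    have "norm x \<le> L * norm (A x)" using L(2)[of "A x"] W(2) by simp
    also have "\<dots> = L * K * norm (A' x)" using K by (simp add: A'_def)
    finally have "(norm x)\<^sup>2 \<le> (L * K)\<^sup>2 * (norm (A' x))\<^sup>2"
      by (simp add: power_mono power_mult_distrib[symmetric])
    also have "\<dots> \<le> (L * K)\<^sup>2 * Re (cinner x (A' x))"
      using positive_contraction_norm_sq_le[OF cl' sa' pos' contr'] by (simp add: mult_left_mono)
    finally have "(1 / (L * K)\<^sup>2) * (norm x)\<^sup>2 \<le> Re (cinner x (A' x))" using K L by (simp add: field_simps)
    moreover have "m * (norm x)\<^sup>2 \<le> (1 / (L * K)\<^sup>2) * (norm x)\<^sup>2" by (rule mult_right_mono) (auto simp: m_def)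
    ultimately show ?thesis by linarith
  qed
  obtain R0 where R0: "bounded_op R0" "is_adj R0 R0" "\<And>x. R0 (R0 x) = A' x"
    using sqrt_coercive_contraction[OF cl' sa' contr' _ _ coercive] K L by (auto simp: m_def)
  define R where "R x = sqrt K *\<^sub>R R0 x" for x
  have "R (R x) = A x" for x
    using R0(3) K(1) clinear_scaleR[OF bounded_opD(1)[OF R0(1)]] by (simp add: R_def A'_def)
  moreover have "bounded_op R" unfolding R_def using bounded_op_scaleR[OF R0(1)] .
  moreover have "is_adj R R" unfolding R_def using is_adj_scaleR[OF R0(2)] .
  ultimately show ?thesis using that invertible_op_if_square_invertible assms(2) by blast
qed

lemma positive_op_scaleR: "positive_op A \<Longrightarrow> 0 \<le> t \<Longrightarrow> positive_op (\<lambda>x. t *\<^sub>R A x)"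
  by (simp add: positive_op_def bounded_op_scaleR cinner_scaleR_right)

lemma positive_op_id_minus_contraction:
  assumes "bounded_op Y" "\<And>x. Im (cinner x (Y x)) = 0" "\<And>x. norm (Y x) \<le> norm x"
  shows "positive_op (\<lambda>x. x - Y x)"
proof -
  have "Re (cinner x (Y x)) \<le> Re (cinner x x)" for x
  proof -
    have "Re (cinner x (Y x)) \<le> norm x * norm (Y x)" by (metis cmod_cinner_le complex_Re_le_cmod order_trans)
    also have "\<dots> \<le> Re (cinner x x)"
      using assms(3)[of x] by (simp add: power2_norm_eq_cinner[symmetric] power2_eq_square mult_left_mono)
    finally show ?thesis .
  qed
  then show ?thesis using assms(1,2)
    by (simp add: positive_op_def bounded_op_diff[OF bounded_op_ident] cinner_diff_right cinner_self_Im)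
qed

lemma positive_invertible_split:
  assumes "positive_op P" "invertible_op P"
  obtains t where "0 < t" "t \<le> 1"
    "positive_op (\<lambda>x. t *\<^sub>R P x)" "invertible_op (\<lambda>x. t *\<^sub>R P x)"
    "positive_op (\<lambda>x. x - t *\<^sub>R P x)" "invertible_op (\<lambda>x. x - t *\<^sub>R P x)"
proof -
  have P: "bounded_op P" "\<And>x. Im (cinner x (P x)) = 0" using assms(1) positive_op_def by auto
  obtain K where K: "K > 0" "\<And>x. norm (P x) \<le> K * norm x" using bounded_opD(2)[OF P(1)] by blast
  define t where "t = 1 / (2 * (K + 1))"
  have t: "0 < t" "t \<le> 1" "t * K \<le> 1/2" using K(1) by (auto simp: t_def field_simps)
  have small: "norm (t *\<^sub>R P x) \<le> (1/2) * norm x" for x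
  proof -
    have "norm (t *\<^sub>R P x) \<le> t * (K * norm x)" using K(2)[of x] t(1) by (simp add: mult_left_mono)
    also have "\<dots> \<le> (1/2) * norm x" using mult_right_mono[OF t(3) norm_ge_zero[of x]] by (simp add: mult.assoc)
    finally show ?thesis .
  qed
  have "bounded_op (\<lambda>x. t *\<^sub>R P x)" using bounded_op_scaleR[OF P(1)] .
  moreover have "Im (cinner x (t *\<^sub>R P x)) = 0" for x using P(2) by (simp add: cinner_scaleR_right)
  moreover have "norm (t *\<^sub>R P x) \<le> norm x" for x using small[of x] norm_ge_zero[of x] by linarith
  ultimately have "positive_op (\<lambda>x. x - t *\<^sub>R P x)" by (rule positive_op_id_minus_contraction)
  moreover have "invertible_op (\<lambda>x. x - t *\<^sub>R P x)"
    using invertible_op_id_minus[OF clinear_scaleR_op[OF bounded_opD(1)[OF P(1)]] small] by simp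
  ultimately show ?thesis
    using that t positive_op_scaleR[OF assms(1)] invertible_op_scaleR[OF assms(2)] by simp
qed

section \<open>Completely positive maps\<close>

definition cp_form :: "('a::cstar_algebra \<Rightarrow> 'h::complex_hilbert \<Rightarrow> 'h) \<Rightarrow> nat \<Rightarrow> (nat \<Rightarrow> nat \<Rightarrow> 'a)
    \<Rightarrow> (nat \<Rightarrow> 'h) \<Rightarrow> complex" where
  "cp_form \<psi> n X \<xi> = (\<Sum>i<n. \<Sum>j<n. cinner (\<xi> i) (\<psi> (\<Sum>k<n. cstar (X k i) * X k j) (\<xi> j)))"

lemma cp_map_iff:
  "cp_map \<psi> \<longleftrightarrow>
     (\<forall>x y. \<psi> (x + y) = (\<lambda>h. \<psi> x h + \<psi> y h)) \<and>
     (\<forall>c x. \<psi> (cscale c x) = (\<lambda>h. cscale c (\<psi> x h))) \<and>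
     (\<forall>a. bounded_op (\<psi> a)) \<and>
     (\<forall>n X \<xi>. Im (cp_form \<psi> n X \<xi>) = 0 \<and> 0 \<le> Re (cp_form \<psi> n X \<xi>))"
  unfolding cp_map_def cp_form_def Let_def by simp

lemma cp_map_bounded: "cp_map \<psi> \<Longrightarrow> bounded_op (\<psi> a)"
  unfolding cp_map_iff by blast

lemma cp_map_compress:
  assumes cp: "cp_map \<psi>" and "bounded_op S" and adj: "is_adj S' S"
  shows "cp_map (\<lambda>a h. S' (\<psi> a (S h)))"
proof -
  have "bounded_op S'" using is_adj_bounded[OF adj \<open>bounded_op S\<close>] .
  note S' = clinearD[OF bounded_opD(1)[OF this]]
  have "cp_form (\<lambda>a h. S' (\<psi> a (S h))) n X \<xi> = cp_form \<psi> n X (\<lambda>i. S (\<xi> i))" for n X \<xi>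
    unfolding cp_form_def using is_adjD_right[OF adj] by simp
  moreover have "bounded_op (\<lambda>h. S' (\<psi> a (S h)))" for a
    using bounded_op_comp[OF \<open>bounded_op S'\<close> bounded_op_comp[OF cp_map_bounded[OF cp] \<open>bounded_op S\<close>]] .
  ultimately show ?thesis using cp unfolding cp_map_iff by (simp add: S')
qed

lemma cp_map_add:
  assumes "cp_map \<psi>1" "cp_map \<psi>2"
  shows "cp_map (\<lambda>a h. \<psi>1 a h + \<psi>2 a h)"
proof -
  have "cp_form (\<lambda>a h. \<psi>1 a h + \<psi>2 a h) n X \<xi> = cp_form \<psi>1 n X \<xi> + cp_form \<psi>2 n X \<xi>" for n X \<xi>
    unfolding cp_form_def by (simp add: cinner_add_right sum.distrib)
  then show ?thesis
    using assms unfolding cp_map_iff by (simp add: bounded_op_add cscale_add_right algebra_simps)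
qed

lemma cp_map_scaleR:
  assumes "cp_map \<psi>" "0 \<le> t"
  shows "cp_map (\<lambda>a h. t *\<^sub>R \<psi> a h)"
proof -
  have "cp_form (\<lambda>a h. t *\<^sub>R \<psi> a h) n X \<xi> = complex_of_real t * cp_form \<psi> n X \<xi>" for n X \<xi>
    unfolding cp_form_def by (simp add: cinner_scaleR_right sum_distrib_left)
  then show ?thesis
    using assms unfolding cp_map_iff by (simp add: bounded_op_scaleR scaleR_add_right scaleR_cscale_commute)
qed

lemma cp_map_sum:
  assumes "finite F" "\<And>j. j \<in> F \<Longrightarrow> cp_map (\<psi> j)"
  shows "cp_map (\<lambda>a h. \<Sum>j\<in>F. \<psi> j a h)"
  using assms
proof (induction F rule: finite_induct)
  case empty
  then show ?case unfolding cp_map_iff cp_form_def by (simp add: bounded_op_zero)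
next
  case (insert j F)
  then show ?case using cp_map_add[of "\<psi> j" "\<lambda>a h. \<Sum>j\<in>F. \<psi> j a h"] by simp
qed

lemma cstar_one: "cstar (1::'a::cstar_algebra) = 1"
  by (metis cstar_cstar cstar_mult mult.right_neutral)

lemma cp_map_unit_positive:
  assumes "cp_map \<psi>"
  shows "positive_op (\<psi> 1)"
proof -
  have "cp_form \<psi> 1 (\<lambda>_ _. 1) (\<lambda>_. x) = cinner x (\<psi> 1 x)" for x by (simp add: cp_form_def cstar_one)
  then show ?thesis using assms unfolding positive_op_def cp_map_iff by metis
qed

lemma CP_inv_compress:
  assumes "\<psi> \<in> CP_inv G \<tau>" "bounded_op S" "is_adj S' S"
  shows "(\<lambda>a h. S' (\<psi> a (S h))) \<in> CP_inv G \<tau>"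
  using assms cp_map_compress unfolding CP_inv_def by auto

section \<open>C*-extreme points\<close>

lemma unital_normalization:
  assumes \<psi>: "\<psi> \<in> CP_inv G \<tau>" and R: "is_adj R R" "invertible_op R" and unit: "\<And>h. \<psi> 1 h = R (R h)"
  obtains \<Phi> where "\<Phi> \<in> UCP_inv G \<tau>" "\<And>a h. \<psi> a h = R (\<Phi> a (R h))"
proof -
  obtain V where V: "bounded_op V" "\<And>x. V (R x) = x" "\<And>x. R (V x) = x" using invertible_opD[OF R(2)] by blast
  define \<Phi> where "\<Phi> a h = V (\<psi> a (V h))" for a h
  have "\<Phi> \<in> CP_inv G \<tau>"
    unfolding \<Phi>_def using CP_inv_compress[OF \<psi> V(1) is_adj_right_inverse[OF R(1) V(3) V(3)]] .
  moreover have "\<Phi> 1 = id" by (auto simp: \<Phi>_def unit V)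
  ultimately show ?thesis using that by (simp add: UCP_inv_def \<Phi>_def V)
qed

lemma dominated_C_convex_split:
  assumes \<phi>: "\<phi> \<in> UCP_inv G \<tau>" and \<psi>: "\<psi> \<in> CP_inv G \<tau>" "cp_le \<psi> \<phi>" "invertible_op (\<psi> 1)"
  obtains t \<Phi>1 \<Phi>2 R1 R2 where "0 < t" "\<Phi>1 \<in> UCP_inv G \<tau>" "\<Phi>2 \<in> UCP_inv G \<tau>"
    "is_adj R1 R1" "invertible_op R1" "is_adj R2 R2" "invertible_op R2" "\<And>h. R1 (R1 h) + R2 (R2 h) = h"
    "\<And>a h. t *\<^sub>R \<psi> a h = R1 (\<Phi>1 a (R1 h))" "\<And>a h. \<phi> a h - t *\<^sub>R \<psi> a h = R2 (\<Phi>2 a (R2 h))"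
proof -
  have cp: "cp_map \<psi>" using \<psi>(1) CP_inv_def by blast
  obtain t where t: "0 < t" "t \<le> 1" and A1: "positive_op (\<lambda>x. t *\<^sub>R \<psi> 1 x)" "invertible_op (\<lambda>x. t *\<^sub>R \<psi> 1 x)"
    and A2: "positive_op (\<lambda>x. x - t *\<^sub>R \<psi> 1 x)" "invertible_op (\<lambda>x. x - t *\<^sub>R \<psi> 1 x)"
    using positive_invertible_split[OF cp_map_unit_positive[OF cp] \<psi>(3)] by blast
  obtain R1 where R1: "is_adj R1 R1" "invertible_op R1" "\<And>x. R1 (R1 x) = t *\<^sub>R \<psi> 1 x"
    using positive_invertible_op_sqrt[OF A1] by blast
  obtain R2 where R2: "is_adj R2 R2" "invertible_op R2" "\<And>x. R2 (R2 x) = x - t *\<^sub>R \<psi> 1 x"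
    using positive_invertible_op_sqrt[OF A2] by blast
  have cp1: "(\<lambda>a h. t *\<^sub>R \<psi> a h) \<in> CP_inv G \<tau>"
    using \<psi>(1) cp_map_scaleR[of \<psi> t] t(1) by (simp add: CP_inv_def)
  have cp2: "(\<lambda>a h. \<phi> a h - t *\<^sub>R \<psi> a h) \<in> CP_inv G \<tau>"
  proof -
    have "cp_map (\<lambda>a h. (\<phi> a h - \<psi> a h) + (1 - t) *\<^sub>R \<psi> a h)"
      using cp_map_add[OF \<psi>(2)[unfolded cp_le_def] cp_map_scaleR[OF cp, of "1 - t"]] t(2) by simp
    then show ?thesis using \<phi> \<psi>(1) by (simp add: UCP_inv_def CP_inv_def algebra_simps)
  qed
  obtain \<Phi>1 where \<Phi>1: "\<Phi>1 \<in> UCP_inv G \<tau>" "\<And>a h. t *\<^sub>R \<psi> a h = R1 (\<Phi>1 a (R1 h))"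
    using unital_normalization[OF cp1 R1(1,2) R1(3)[symmetric]] by blast
  have "\<phi> 1 h - t *\<^sub>R \<psi> 1 h = R2 (R2 h)" for h using \<phi> R2(3) by (simp add: UCP_inv_def)
  then obtain \<Phi>2 where \<Phi>2: "\<Phi>2 \<in> UCP_inv G \<tau>" "\<And>a h. \<phi> a h - t *\<^sub>R \<psi> a h = R2 (\<Phi>2 a (R2 h))"
    using unital_normalization[OF cp2 R2(1,2)] by blast
  have "R1 (R1 h) + R2 (R2 h) = h" for h using R1(3) R2(3) by simp
  from that[OF t(1) \<Phi>1(1) \<Phi>2(1) R1(1,2) R2(1,2) this \<Phi>1(2) \<Phi>2(2)] show ?thesis .
qed

lemma conjugate_if_scaled_conjugate:
  assumes "0 < t" "invertible_op S" "\<And>a. clinear (\<phi> a)" "\<And>a h. t *\<^sub>R \<psi> a h = adj S (\<phi> a (S h))"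
  shows "\<exists>Z. invertible_op Z \<and> (\<forall>a. \<psi> a = adj Z \<circ> \<phi> a \<circ> Z)"
proof -
  have "bounded_op S" using assms(2) invertible_op_bounded by blast
  define c where "c = 1 / sqrt t"
  define Z where "Z h = c *\<^sub>R S h" for h
  have "invertible_op Z" unfolding Z_def using invertible_op_scaleR[OF assms(2)] assms(1) by (simp add: c_def)
  moreover have "adj Z = (\<lambda>h. c *\<^sub>R adj S h)"
    unfolding Z_def by (rule adj_eqI, rule is_adj_scaleR, rule is_adj_adj) fact
  moreover have "\<psi> a = adj Z \<circ> \<phi> a \<circ> Z" for a
  proof
    fix h
    have "clinear (adj S)" using adj_bounded[OF \<open>bounded_op S\<close>] bounded_opD(1) by blast
    then have "(adj Z \<circ> \<phi> a \<circ> Z) h = (c * c) *\<^sub>R adj S (\<phi> a (S h))"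
      unfolding \<open>adj Z = _\<close> Z_def by (simp add: clinear_scaleR assms(3))
    also have "\<dots> = \<psi> a h" using assms(1) by (simp add: c_def assms(4)[symmetric])
    finally show "\<psi> a h = (adj Z \<circ> \<phi> a \<circ> Z) h" ..
  qed
  ultimately show ?thesis by blast
qed

lemma dominated_conjugate_if_C_extreme:
  assumes CE: "C_extreme G \<tau> \<phi>" and \<psi>: "\<psi> \<in> CP_inv G \<tau>" "cp_le \<psi> \<phi>" "invertible_op (\<psi> 1)"
  shows "\<exists>Z. invertible_op Z \<and> (\<forall>a. \<psi> a = adj Z \<circ> \<phi> a \<circ> Z)"
proof -
  have \<phi>: "\<phi> \<in> UCP_inv G \<tau>" using CE C_extreme_def by blast
  obtain t \<Phi>1 \<Phi>2 R1 R2 where t: "0 < t" and \<Phi>: "\<Phi>1 \<in> UCP_inv G \<tau>" "\<Phi>2 \<in> UCP_inv G \<tau>"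
    and R: "is_adj R1 R1" "invertible_op R1" "is_adj R2 R2" "invertible_op R2"
    and unit: "\<And>h. R1 (R1 h) + R2 (R2 h) = h" and \<psi>1: "\<And>a h. t *\<^sub>R \<psi> a h = R1 (\<Phi>1 a (R1 h))"
    and \<psi>2: "\<And>a h. \<phi> a h - t *\<^sub>R \<psi> a h = R2 (\<Phi>2 a (R2 h))"
    using dominated_C_convex_split[OF \<phi> \<psi>] by metis
  define T where "T i = (if i = 0 then R1 else R2)" for i :: nat
  define \<Phi> where "\<Phi> i = (if i = 0 then \<Phi>1 else \<Phi>2)" for i :: nat
  have "adj R1 = R1" "adj R2 = R2" using R adj_eqI by blast+
  then have "\<forall>i<2. \<Phi> i \<in> UCP_inv G \<tau> \<and> invertible_op (T i)" "\<forall>h. (\<Sum>i<2. adj (T i) (T i h)) = h"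
    "\<forall>a. \<phi> a = (\<lambda>h. \<Sum>i<2. adj (T i) (\<Phi> i a (T i h)))"
    using \<Phi> R(2,4) unit by (auto simp: T_def \<Phi>_def less_2_cases_iff numeral_2_eq_2 fun_eq_iff
        \<psi>1[symmetric] \<psi>2[symmetric])
  then obtain Us where "\<forall>i<2. unitary_op (Us i) \<and> (\<forall>a. \<Phi> i a = adj (Us i) \<circ> \<phi> a \<circ> Us i)"
    using CE[unfolded C_extreme_def, THEN conjunct2, rule_format, where n=2 and T=T and \<Phi>=\<Phi>] by blast
  then have "unitary_op (Us 0)" "\<And>a. \<Phi> 0 a = adj (Us 0) \<circ> \<phi> a \<circ> Us 0" by auto
  then have U: "unitary_op (Us 0)" "\<And>a. \<Phi>1 a = adj (Us 0) \<circ> \<phi> a \<circ> Us 0" by (simp_all add: \<Phi>_def)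
  define S where "S h = Us 0 (R1 h)" for h
  have "invertible_op S"
    unfolding S_def using invertible_op_comp[OF unitary_op_invertible[OF U(1)] R(2)] .
  moreover have "clinear (\<phi> a)" for a
    using \<phi> cp_map_bounded bounded_opD(1) unfolding UCP_inv_def CP_inv_def by blast
  moreover have "t *\<^sub>R \<psi> a h = adj S (\<phi> a (S h))" for a h
  proof -
    have "bounded_op (Us 0)" using U(1) unfolding unitary_op_def by blast
    then have "adj S = (\<lambda>h. R1 (adj (Us 0) h))"
      unfolding S_def by (intro adj_eqI is_adj_comp[OF is_adj_adj R(1)])
    then show ?thesis using \<psi>1[of a h] U(2)[of a] by (simp add: S_def)
  qed
  ultimately show ?thesis by (rule conjugate_if_scaled_conjugate[OF t])
qed

lemma unitary_if_compressions_eq: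
  assumes T: "invertible_op T" and Z: "invertible_op Z" and unital: "\<Phi> 1 = id" "\<phi> 1 = id"
    and compressions: "\<And>a h. adj T (\<Phi> a (T h)) = adj Z (\<phi> a (Z h))"
  shows "\<exists>U. unitary_op U \<and> (\<forall>a. \<Phi> a = adj U \<circ> \<phi> a \<circ> U)"
proof -
  obtain W where W: "bounded_op W" "\<And>x. W (T x) = x" "\<And>x. T (W x) = x" using invertible_opD[OF T] by blast
  obtain Zi where Zi: "\<And>x. Z (Zi x) = x" using invertible_opD[OF Z] by metis
  have "bounded_op T" "bounded_op Z" using T Z invertible_op_bounded by blast+
  have adjW: "adj W (adj T x) = x" for x
    by (rule cinner_eqI) (simp add: is_adjD[OF is_adj_adj[OF W(1)]] is_adjD[OF is_adj_adj[OF \<open>bounded_op T\<close>]] W(3))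
  define U where "U h = Z (W h)" for h
  have "adj U = (\<lambda>h. adj W (adj Z h))"
    unfolding U_def by (rule adj_eqI) (rule is_adj_comp[OF is_adj_adj[OF \<open>bounded_op Z\<close>] is_adj_adj[OF W(1)]])
  then have conj: "\<Phi> a h = adj U (\<phi> a (U h))" for a h
    using compressions[of a "W h"] adjW[of "\<Phi> a h"] by (simp add: U_def W(3))
  have "bounded_op U" unfolding U_def using bounded_op_comp[OF \<open>bounded_op Z\<close> W(1)] .
  moreover have "adj U (U h) = h" for h using conj[of 1 h] unital by simp
  moreover have "U (T (Zi h)) = h" for h by (simp add: U_def W(2) Zi)
  ultimately have "unitary_op U" by (rule unitary_opI)
  with conj show ?thesis by (intro exI[of _ U]) (simp add: fun_eq_iff)
qed

lemma cp_le_summand: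
  assumes "finite I" "i \<in> I" "\<And>j. j \<in> I \<Longrightarrow> cp_map (\<psi> j)" "\<And>a h. \<phi> a h = (\<Sum>j\<in>I. \<psi> j a h)"
  shows "cp_le (\<psi> i) \<phi>"
proof -
  have "(\<lambda>a h. \<phi> a h - \<psi> i a h) = (\<lambda>a h. \<Sum>j\<in>I - {i}. \<psi> j a h)"
    using assms(1,2,4) by (simp add: sum.remove)
  moreover have "cp_map (\<lambda>a h. \<Sum>j\<in>I - {i}. \<psi> j a h)" using assms(1,3) by (intro cp_map_sum) auto
  ultimately show ?thesis unfolding cp_le_def by simp
qed

lemma C_extreme_if_dominated_conjugate:
  fixes \<phi> :: "'a::cstar_algebra \<Rightarrow> 'h::complex_hilbert \<Rightarrow> 'h"
  assumes \<phi>: "\<phi> \<in> UCP_inv G \<tau>"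
    and dominated: "\<forall>\<psi> \<in> CP_inv G \<tau>. cp_le \<psi> \<phi> \<and> invertible_op (\<psi> 1) \<longrightarrow>
       (\<exists>Z. invertible_op Z \<and> (\<forall>a. \<psi> a = adj Z \<circ> \<phi> a \<circ> Z))"
  shows "C_extreme G \<tau> \<phi>"
  unfolding C_extreme_def
proof (intro conjI allI impI \<phi>)
  fix n :: nat and T :: "nat \<Rightarrow> 'h \<Rightarrow> 'h" and \<Phi> :: "nat \<Rightarrow> 'a \<Rightarrow> 'h \<Rightarrow> 'h"
  assume "(\<forall>i<n. \<Phi> i \<in> UCP_inv G \<tau> \<and> invertible_op (T i)) \<and> (\<forall>h. (\<Sum>i<n. adj (T i) (T i h)) = h)
    \<and> (\<forall>a. \<phi> a = (\<lambda>h. \<Sum>i<n. adj (T i) (\<Phi> i a (T i h))))"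
  then have \<Phi>: "\<And>i. i < n \<Longrightarrow> \<Phi> i \<in> UCP_inv G \<tau>" and T: "\<And>i. i < n \<Longrightarrow> invertible_op (T i)"
    and decomposition: "\<And>a h. \<phi> a h = (\<Sum>i<n. adj (T i) (\<Phi> i a (T i h)))" by auto
  define \<psi> where "\<psi> i a h = adj (T i) (\<Phi> i a (T i h))" for i a h
  have \<psi>: "\<psi> i \<in> CP_inv G \<tau>" if "i < n" for i
    unfolding \<psi>_def using CP_inv_compress[of "\<Phi> i" G \<tau> "T i"] \<Phi> T that
    by (simp add: UCP_inv_def invertible_op_bounded is_adj_adj)
  have "\<phi> a h = (\<Sum>j<n. \<psi> j a h)" for a h using decomposition by (simp add: \<psi>_def)
  have "\<exists>U. unitary_op U \<and> (\<forall>a. \<Phi> i a = adj U \<circ> \<phi> a \<circ> U)" if i: "i < n" for i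
  proof -
    have "cp_le (\<psi> i) \<phi>"
      using \<psi> \<open>\<And>a h. \<phi> a h = (\<Sum>j<n. \<psi> j a h)\<close> i
      by (intro cp_le_summand[of "{..<n}"]) (auto simp: CP_inv_def)
    moreover have "\<psi> i 1 = (\<lambda>h. adj (T i) (T i h))" using \<Phi>[OF i] by (auto simp: \<psi>_def UCP_inv_def)
    then have "invertible_op (\<psi> i 1)" using invertible_op_comp[OF invertible_op_adj[OF T] T, OF i i] by simp
    ultimately obtain Z where "invertible_op Z" "\<And>a. \<psi> i a = adj Z \<circ> \<phi> a \<circ> Z"
      using dominated \<psi>[OF i] by blast
    moreover have "adj (T i) (\<Phi> i a (T i h)) = adj Z (\<phi> a (Z h))" for a h
      using fun_cong[OF \<open>\<And>a. \<psi> i a = _\<close>[of a], of h] by (simp add: \<psi>_def)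
    moreover have "\<Phi> i 1 = id" "\<phi> 1 = id" using \<Phi>[OF i] \<phi> by (simp_all add: UCP_inv_def)
    ultimately show ?thesis using unitary_if_compressions_eq[OF T[OF i]] by blast
  qed
  then show "\<exists>U. \<forall>i<n. unitary_op (U i) \<and> (\<forall>a. \<Phi> i a = adj (U i) \<circ> \<phi> a \<circ> U i)"
    by (subst choice_iff'[symmetric]) blast
qed

theorem theorem4p4:
  fixes G :: "('g, 'b) monoid_scheme"
    and \<tau> :: "'g \<Rightarrow> 'a::cstar_algebra \<Rightarrow> 'a"
    and \<phi> :: "'a \<Rightarrow> 'h::complex_hilbert \<Rightarrow> 'h"
  assumes "group G"
    and "cstar_action G \<tau>"
    and "\<phi> \<in> UCP_inv G \<tau>"
  shows "C_extreme G \<tau> \<phi> \<longleftrightarrow>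
    (\<forall>\<psi> \<in> CP_inv G \<tau>. cp_le \<psi> \<phi> \<and> invertible_op (\<psi> 1) \<longrightarrow>
       (\<exists>Z. invertible_op Z \<and> (\<forall>a. \<psi> a = adj Z \<circ> \<phi> a \<circ> Z)))"
  using C_extreme_if_dominated_conjugate[OF assms(3)] dominated_conjugate_if_C_extreme by blast

end
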